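(* Let $K$ be a field of characteristic zero and let $F^{(y)}:K[x]\to K[x,y]$ be a $K$-linear operator. Suppose $(p_n(x))_{n\ge0}$ and $(p'_n(x))_{n\ge0}$ are two sequences of polynomials in $K[x]$ with $\deg p_n=\deg p'_n=n$ such that for all $n\ge 0$ $$F^{(y)}p_n(x)=\sum_{k=0}^np_k(x)p_{n-k}(y)\quad\text{and}\quad F^{(y)}p'_n(x)=\sum_{k=0}^np'_k(x)p'_{n-k}(y).$$ Let $\epsilon,\epsilon':K[x]\to K$ be the linear maps defined by $\epsilon p_n(x)=\delta_{n0}$ and $\epsilon' p'_n(x)=\delta_{n0}$. Then $\epsilon=\epsilon'$. *)

theory Defs
  imports "HOL-Computational_Algebra.Polynomial"
begin

text \<open>K[x,y] is represented as K[y][x], i.e. type 'a poly poly: the outer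
variable is x, the coefficients are polynomials in y.\<close>

definition const_y :: "'a::comm_ring_1 poly \<Rightarrow> 'a poly poly" where
  "const_y p = map_poly (\<lambda>c. [:c:]) p"

definition xy_prod :: "'a::comm_ring_1 poly \<Rightarrow> 'a poly \<Rightarrow> 'a poly poly" where
  "xy_prod p q = smult q (const_y p)"

definition K_linear_op :: "('a::comm_ring_1 poly \<Rightarrow> 'a poly poly) \<Rightarrow> bool" where
  "K_linear_op F \<longleftrightarrow> (\<forall>p q. F (p + q) = F p + F q) \<and>
                     (\<forall>c p. F (smult c p) = smult [:c:] (F p))"

definition K_linear_functional :: "('a::comm_ring_1 poly \<Rightarrow> 'a) \<Rightarrow> bool" where
  "K_linear_functional e \<longleftrightarrow> (\<forall>p q. e (p + q) = e p + e q) \<and>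
                              (\<forall>c p. e (smult c p) = c * e p)"

end

theory Submission
  imports Defs
begin

text \<open>Applying \<open>\<epsilon>\<close> in the variable y (i.e. \<open>map_poly \<epsilon>\<close>) turns F into the identity, since this holds on
  the basis \<open>p\<^sub>n\<close>: \<open>\<epsilon>\<close> is a counit of the coproduct F. Applying \<open>\<epsilon>'\<close> to
  \<open>(id \<otimes> \<epsilon>) F p'\<^sub>n = p'\<^sub>n\<close> and expanding with the coproduct formula for \<open>p'\<^sub>n\<close> gives
  \<open>\<epsilon>'(p'\<^sub>n) = \<Sum>\<^sub>k \<epsilon>'(p'\<^sub>k) \<epsilon>(p'\<^sub>n\<^sub>-\<^sub>k) = \<epsilon>(p'\<^sub>n)\<close>, so the two functionals agree
  on the basis \<open>p'\<^sub>n\<close>.\<close>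

lemma K_linear_functional_add:
  "K_linear_functional e \<Longrightarrow> e (p + q) = e p + e q"
  unfolding K_linear_functional_def by blast

lemma K_linear_functional_smult:
  "K_linear_functional e \<Longrightarrow> e (smult c p) = c * e p"
  unfolding K_linear_functional_def by blast

lemma K_linear_functional_zero: "K_linear_functional e \<Longrightarrow> e 0 = 0"
  using K_linear_functional_add[of e 0 0] by simp

lemma K_linear_functional_sum:
  "K_linear_functional e \<Longrightarrow> e (\<Sum>k\<in>A. f k) = (\<Sum>k\<in>A. e (f k))"
  by (induction A rule: infinite_finite_induct)
     (simp_all add: K_linear_functional_zero K_linear_functional_add)

lemma K_linear_op_zero: "K_linear_op F \<Longrightarrow> F 0 = 0"
  unfolding K_linear_op_def by (metis add_cancel_right_right add_0)

lemma map_poly_K_linear_functional_add: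
  assumes "K_linear_functional e"
  shows "map_poly e (P + Q) = map_poly e P + map_poly e Q"
  using assms by (intro poly_eqI)
    (simp add: coeff_map_poly K_linear_functional_zero K_linear_functional_add)

lemma map_poly_K_linear_functional_smult:
  assumes "K_linear_functional e"
  shows "map_poly e (smult [:c:] P) = smult c (map_poly e P)"
  using assms by (intro poly_eqI)
    (simp add: coeff_map_poly K_linear_functional_zero K_linear_functional_smult)

lemma map_poly_K_linear_functional_sum:
  assumes "K_linear_functional e"
  shows "map_poly e (\<Sum>k\<in>A. f k) = (\<Sum>k\<in>A. map_poly e (f k))"
  by (induction A rule: infinite_finite_induct)
     (simp_all add: map_poly_K_linear_functional_add[OF assms])

lemma map_poly_K_linear_functional_xy_prod:
  assumes "K_linear_functional e"
  shows "map_poly e (xy_prod a b) = smult (e b) a"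
  using assms by (intro poly_eqI)
    (simp add: xy_prod_def const_y_def coeff_map_poly mult.commute
      K_linear_functional_zero K_linear_functional_smult)

lemma degree_basis_induct:
  fixes p :: "nat \<Rightarrow> 'a::field poly"
  assumes deg: "\<And>n. degree (p n) = n" and nz: "\<And>n. p n \<noteq> 0"
    and zero: "P 0" and add: "\<And>f g. P f \<Longrightarrow> P g \<Longrightarrow> P (f + g)"
    and smult: "\<And>c f. P f \<Longrightarrow> P (smult c f)" and basis: "\<And>n. P (p n)"
  shows "P f"
proof (induction "degree f" arbitrary: f rule: less_induct)
  case less
  show ?case
  proof (cases "f = 0")
    case True
    then show ?thesis using zero by simp
  next
    case False
    define d where "d = degree f"
    define c where "c = lead_coeff f / lead_coeff (p d)"
    define g where "g = f - smult c (p d)"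
    have "lead_coeff (p d) \<noteq> 0" using nz by simp
    then have "coeff g d = 0" unfolding g_def c_def by (simp add: deg d_def)
    moreover have "degree g \<le> d" unfolding g_def
      by (metis deg degree_diff_le degree_smult_le d_def order.refl)
    ultimately have "g = 0 \<or> degree g < degree f"
      using d_def le_neq_implies_less leading_coeff_0_iff by metis
    then have "P g" using zero less by blast
    moreover have "f = g + smult c (p d)" unfolding g_def by simp
    ultimately show ?thesis using add smult basis by metis
  qed
qed

lemma K_linear_functional_eqI_degree_basis:
  fixes p :: "nat \<Rightarrow> 'a::field poly"
  assumes "\<And>n. degree (p n) = n" "\<And>n. p n \<noteq> 0"
    and "K_linear_functional e" "K_linear_functional e'"
    and "\<And>n. e (p n) = e' (p n)"
  shows "e = e'"
proof
  fix f
  show "e f = e' f"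
    by (rule degree_basis_induct[of p, OF assms(1,2)])
      (simp_all add: assms(5) K_linear_functional_zero K_linear_functional_add
        K_linear_functional_smult assms(3,4))
qed

lemma counit_map_poly:
  fixes p :: "nat \<Rightarrow> 'a::field poly"
  assumes F: "K_linear_op F"
    and deg: "\<And>n. degree (p n) = n" and nz: "\<And>n. p n \<noteq> 0"
    and coprod: "\<And>n. F (p n) = (\<Sum>k\<le>n. xy_prod (p k) (p (n - k)))"
    and e: "K_linear_functional e" and e_p: "\<And>n. e (p n) = (if n = 0 then 1 else 0)"
  shows "map_poly e (F f) = f"
proof (rule degree_basis_induct[of p, OF deg nz])
  fix n
  have "map_poly e (F (p n)) = (\<Sum>k\<le>n. smult (e (p (n - k))) (p k))"
    by (simp add: coprod map_poly_K_linear_functional_sum[OF e]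
      map_poly_K_linear_functional_xy_prod[OF e])
  also have "\<dots> = (\<Sum>k\<le>n. if k = n then p k else 0)"
    using e_p by (intro sum.cong) auto
  finally show "map_poly e (F (p n)) = p n" by simp
qed (use F[unfolded K_linear_op_def] in
      \<open>simp_all add: K_linear_op_zero[OF F] map_poly_K_linear_functional_add[OF e]
        map_poly_K_linear_functional_smult[OF e]\<close>)

theorem corollary1:
  fixes F :: "'a::field_char_0 poly \<Rightarrow> 'a poly poly"
    and p p' :: "nat \<Rightarrow> 'a poly"
    and e e' :: "'a poly \<Rightarrow> 'a"
  assumes "K_linear_op F"
    and "\<And>n. degree (p n) = n" and "\<And>n. p n \<noteq> 0"
    and "\<And>n. degree (p' n) = n" and "\<And>n. p' n \<noteq> 0"
    and "\<And>n. F (p n) = (\<Sum>k\<le>n. xy_prod (p k) (p (n - k)))"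
    and "\<And>n. F (p' n) = (\<Sum>k\<le>n. xy_prod (p' k) (p' (n - k)))"
    and "K_linear_functional e" and "\<And>n. e (p n) = (if n = 0 then 1 else 0)"
    and "K_linear_functional e'" and "\<And>n. e' (p' n) = (if n = 0 then 1 else 0)"
  shows "e = e'"
proof (rule K_linear_functional_eqI_degree_basis[of p', OF assms(4,5,8,10)])
  fix n
  have "e' (p' n) = e' (map_poly e (F (p' n)))"
    using counit_map_poly[OF assms(1-3,6,8,9)] by simp
  also have "\<dots> = (\<Sum>k\<le>n. e (p' (n - k)) * e' (p' k))"
    by (simp add: assms(7) map_poly_K_linear_functional_sum[OF assms(8)]
      map_poly_K_linear_functional_xy_prod[OF assms(8)]
      K_linear_functional_sum[OF assms(10)] K_linear_functional_smult[OF assms(10)])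
  also have "\<dots> = (\<Sum>k\<le>n. if k = 0 then e (p' n) else 0)"
    using assms(11) by (intro sum.cong) auto
  finally show "e (p' n) = e' (p' n)" by simp
qed

end
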